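(* Let $n,k$ be integers with $1\le k$ and $n\ge k+2$. For real constants $c_0,\dots,c_{n-1}$ and an ordered bid vector $b_1\ge b_2\ge\dots\ge b_n\ge 0$, define for $i=1,\dots,n$ $$r_i=c_0+c_1b_1+\dots+c_{i-1}b_{i-1}+c_ib_{i+1}+\dots+c_{n-1}b_n.$$ Consider the optimization problem: maximize $f$ over $(f,c_0,\dots,c_{n-1})\in\mathbb{R}^{n+1}$ subject to, for every ordered bid vector $b_1\ge\dots\ge b_n\ge 0$: (i) $r_n\ge 0$; (ii) $\sum_{i=1}^n r_i\le k\,b_k$; (iii) $\sum_{i=1}^k r_i\ge f\cdot k\,b_{k+1}$. Then this problem has a unique optimal solution, namely $f^*=\frac{k}{n}$, $c_k^*=\frac{k}{n}$ and $c_i^*=0$ for all $i\ne k$. In particular the optimal worst-case fraction redistributed to the $k$ confirmed users is $k/n$, and the resulting mechanism (R-TFRM) is unique.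
   Context: Interpretation: in a block with $n$ included transactions whose bids are $b_1\ge\dots\ge b_n$, the top $k$ are confirmed and each pays $b_{k+1}$ minus the rebate $r_i$; included unconfirmed users pay $-r_i$. Constraint (i) encodes user individual rationality, (ii) an approximate miner individual rationality (total rebate at most $k\,b_k$), and (iii) that at least the fraction $f$ of the VCG payment $k\,b_{k+1}$ is returned to the confirmed users. *)

theory Defs
  imports Main Complex_Main
begin

text \<open>Bids are indexed 1..n (b i for i in {1..n}); constants c are indexed 0..n-1.\<close>

definition ordered_bids :: "nat \<Rightarrow> (nat \<Rightarrow> real) \<Rightarrow> bool" where
  "ordered_bids n b \<longleftrightarrow> (\<forall>i. 1 \<le> i \<and> i < n \<longrightarrow> b i \<ge> b (Suc i)) \<and> b n \<ge> 0"

definition rebate :: "nat \<Rightarrow> (nat \<Rightarrow> real) \<Rightarrow> (nat \<Rightarrow> real) \<Rightarrow> nat \<Rightarrow> real" where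
  "rebate n c b i = c 0 + (\<Sum>j\<in>{1..<i}. c j * b j) + (\<Sum>j\<in>{i..<n}. c j * b (Suc j))"

definition feasible :: "nat \<Rightarrow> nat \<Rightarrow> real \<Rightarrow> (nat \<Rightarrow> real) \<Rightarrow> bool" where
  "feasible n k f c \<longleftrightarrow> (\<forall>b. ordered_bids n b \<longrightarrow>
      rebate n c b n \<ge> 0 \<and>
      (\<Sum>i\<in>{1..n}. rebate n c b i) \<le> real k * b k \<and>
      (\<Sum>i\<in>{1..k}. rebate n c b i) \<ge> f * (real k * b (Suc k)))"

definition optimal :: "nat \<Rightarrow> nat \<Rightarrow> real \<Rightarrow> (nat \<Rightarrow> real) \<Rightarrow> bool" where
  "optimal n k f c \<longleftrightarrow> feasible n k f c \<and> (\<forall>f' c'. feasible n k f' c' \<longrightarrow> f' \<le> f)"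

end

theory Submission
  imports Defs
begin

text \<open>Write \<open>P m = c 0 + \<dots> + c (m - 1)\<close>. On the step bid vector with \<open>m\<close> ones followed
  by zeros, users \<open>i \<le> m\<close> receive the rebate \<open>P m\<close> and users \<open>i > m\<close> receive \<open>P (m + 1)\<close>,
  so the three constraints become linear conditions on the partial sums:
  \<open>P m \<ge> 0\<close>, \<open>m P m + (n - m) P (m + 1) \<le> k [k \<le> m]\<close> and \<open>P m \<ge> f\<close> for \<open>m > k\<close>.
  The middle condition forces \<open>P m = 0\<close> for \<open>m \<le> k\<close>, and for \<open>k < m < n\<close> it gives
  \<open>n f \<le> m P m + (n - m) P (m + 1) \<le> k\<close>. Hence \<open>f \<le> k / n\<close>, and equality pins
  \<open>P m = k / n\<close> for all \<open>m > k\<close>, i.e. the only nonzero coefficient is \<open>c k = k / n\<close>.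
  Conversely this mechanism pays \<open>(k / n) b (k + 1)\<close> to the confirmed users and
  \<open>(k / n) b k\<close> to the others, which satisfies all three constraints.\<close>

definition step_bids :: "nat \<Rightarrow> nat \<Rightarrow> real" where
  "step_bids m j = (if j \<le> m then 1 else 0)"

lemma ordered_bids_step_bids: "ordered_bids n (step_bids m)"
  unfolding ordered_bids_def step_bids_def by auto

lemma ordered_bids_nonneg:
  assumes "ordered_bids n b" "1 \<le> j" "j \<le> n"
  shows "0 \<le> b j"
  using assms(3)
proof (induction j rule: inc_induct)
  case base
  then show ?case using assms(1) by (simp add: ordered_bids_def)
next
  case (step i)
  then have "b (Suc i) \<le> b i"
    using assms(1,2) by (simp add: ordered_bids_def)
  then show ?case using step.IH by linarith
qed

lemma rebate_step_bids:
  assumes "1 \<le> i" "i \<le> n" "m \<le> n"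
  shows "rebate n c (step_bids m) i = (if i \<le> m then (\<Sum>j<m. c j) else (\<Sum>j<Suc m. c j))"
proof (cases "i \<le> m")
  case True
  have "(\<Sum>j\<in>{1..<i}. c j * step_bids m j) = (\<Sum>j\<in>{1..<i}. c j)"
    using True by (intro sum.cong) (auto simp: step_bids_def)
  moreover have "(\<Sum>j\<in>{i..<n}. c j * step_bids m (Suc j)) = (\<Sum>j\<in>{i..<n} \<inter> {..<m}. c j)"
    by (auto simp: sum.inter_restrict step_bids_def Suc_le_eq intro!: sum.cong)
  moreover have "{i..<n} \<inter> {..<m} = {i..<m}"
    using assms by auto
  moreover have "c 0 + (\<Sum>j\<in>{1..<i}. c j) + (\<Sum>j\<in>{i..<m}. c j) = (\<Sum>j<m. c j)"
    using True assms by (simp add: sum.atLeastLessThan_concat lessThan_atLeast0 sum.atLeast_Suc_lessThan)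
  ultimately show ?thesis using True by (simp add: rebate_def)
next
  case False
  have "(\<Sum>j\<in>{1..<i}. c j * step_bids m j) = (\<Sum>j\<in>{1..<i} \<inter> {..m}. c j)"
    by (auto simp: sum.inter_restrict step_bids_def intro!: sum.cong)
  moreover have "{1..<i} \<inter> {..m} = {1..<Suc m}"
    using False by auto
  moreover have "(\<Sum>j\<in>{i..<n}. c j * step_bids m (Suc j)) = 0"
    using False by (intro sum.neutral) (auto simp: step_bids_def)
  moreover have "c 0 + (\<Sum>j\<in>{1..<Suc m}. c j) = (\<Sum>j<Suc m. c j)"
    by (simp add: lessThan_atLeast0 sum.atLeast_Suc_lessThan)
  ultimately show ?thesis using False by (simp add: rebate_def)
qed

lemma sum_if_le_threshold:
  "(\<Sum>i=1..N. if i \<le> m then x else y) = real (min m N) * x + real (N - m) * (y :: real)"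
proof -
  have "{1..N} \<inter> {i. i \<le> m} = {1..min m N}" "{1..N} \<inter> - {i. i \<le> m} = {Suc m..N}"
    by auto
  then show ?thesis by (simp add: sum.If_cases)
qed

lemma weighted_sum_at_lower_bound:
  fixes a b x y f :: "'a :: linordered_field"
  assumes "0 < a" "0 < b" "f \<le> x" "f \<le> y" "a * x + b * y \<le> (a + b) * f"
  shows "x = f \<and> y = f"
proof -
  have "0 \<le> a * (x - f)" "0 \<le> b * (y - f)"
    using assms by simp_all
  moreover have "a * (x - f) + b * (y - f) \<le> 0"
    using assms(5) by (simp add: algebra_simps)
  ultimately have "a * (x - f) = 0" "b * (y - f) = 0"
    by linarith+
  then show ?thesis
    using assms(1,2) by simp
qed

lemma feasible_step_bids:
  assumes feas: "feasible n k f c" and "m \<le> n"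
  shows "m < n \<Longrightarrow> 0 \<le> (\<Sum>j<Suc m. c j)"
    and "real m * (\<Sum>j<m. c j) + real (n - m) * (\<Sum>j<Suc m. c j) \<le> (if k \<le> m then real k else 0)"
    and "k < m \<Longrightarrow> f * real k \<le> real k * (\<Sum>j<m. c j)"
proof -
  let ?r = "\<lambda>i. if i \<le> m then (\<Sum>j<m. c j) else (\<Sum>j<Suc m. c j)"
  have r: "rebate n c (step_bids m) i = ?r i" if "i \<in> {1..n}" for i
    using that \<open>m \<le> n\<close> by (simp add: rebate_step_bids)
  have F: "0 \<le> rebate n c (step_bids m) n"
    "(\<Sum>i=1..n. rebate n c (step_bids m) i) \<le> real k * step_bids m k"
    "f * (real k * step_bids m (Suc k)) \<le> (\<Sum>i=1..k. rebate n c (step_bids m) i)"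
    using feas ordered_bids_step_bids unfolding feasible_def by blast+
  show "m < n \<Longrightarrow> 0 \<le> (\<Sum>j<Suc m. c j)"
    using F(1) r[of n] by simp
  have "(\<Sum>i=1..n. rebate n c (step_bids m) i) = (\<Sum>i=1..n. ?r i)"
    using r by (intro sum.cong) auto
  also have "\<dots> = real m * (\<Sum>j<m. c j) + real (n - m) * (\<Sum>j<Suc m. c j)"
    using \<open>m \<le> n\<close> by (simp only: sum_if_le_threshold min_absorb1)
  finally show "real m * (\<Sum>j<m. c j) + real (n - m) * (\<Sum>j<Suc m. c j) \<le> (if k \<le> m then real k else 0)"
    using F(2) by (auto simp: step_bids_def)
  assume "k < m"
  then have "(\<Sum>i=1..k. rebate n c (step_bids m) i) = (\<Sum>i=1..k. ?r i)"
    using r \<open>m \<le> n\<close> by (intro sum.cong) auto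
  also have "\<dots> = real k * (\<Sum>j<m. c j)"
    using \<open>k < m\<close> by (simp only: sum_if_le_threshold min_absorb2 less_imp_le)
  finally show "f * real k \<le> real k * (\<Sum>j<m. c j)"
    using F(3) \<open>k < m\<close> by (simp add: step_bids_def)
qed

lemma feasible_partial_sum_nonneg:
  assumes "feasible n k f c" "m \<le> n"
  shows "0 \<le> (\<Sum>j<m. c j)"
proof (cases m)
  case (Suc m')
  then show ?thesis using feasible_step_bids(1)[OF assms(1), of m'] assms(2) by simp
qed simp

lemma feasible_partial_sum_zero:
  assumes feas: "feasible n k f c" and "k < n" "m \<le> k"
  shows "(\<Sum>j<m. c j) = 0"
proof (cases m)
  case (Suc m')
  have "real m' * (\<Sum>j<m'. c j) + real (n - m') * (\<Sum>j<m. c j) \<le> 0"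
    using feasible_step_bids(2)[OF feas, of m'] Suc assms by simp
  moreover have "0 \<le> real m' * (\<Sum>j<m'. c j)"
    using feasible_partial_sum_nonneg[OF feas, of m'] Suc assms by simp
  ultimately have "real (n - m') * (\<Sum>j<m. c j) \<le> 0"
    by linarith
  moreover have "0 < real (n - m')"
    using Suc assms by simp
  ultimately have "(\<Sum>j<m. c j) \<le> 0"
    by (simp add: mult_le_0_iff)
  then show ?thesis
    using feasible_partial_sum_nonneg[OF feas, of m] assms by simp
qed simp

lemma feasible_partial_sum_ge:
  assumes "feasible n k f c" "1 \<le> k" "k < m" "m \<le> n"
  shows "f \<le> (\<Sum>j<m. c j)"
  using feasible_step_bids(3)[OF assms(1,4,3)] assms(2) by simp

lemma feasible_ratio_le:
  assumes feas: "feasible n k f c" and "1 \<le> k" "k + 2 \<le> n"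
  shows "f \<le> real k / real n"
proof -
  have "real (Suc k) * (\<Sum>j<Suc k. c j) + real (n - Suc k) * (\<Sum>j<Suc (Suc k). c j) \<le> real k"
    using feasible_step_bids(2)[OF feas, of "Suc k"] assms by simp
  moreover have "real (Suc k) * f \<le> real (Suc k) * (\<Sum>j<Suc k. c j)"
    using feasible_partial_sum_ge[OF feas, of "Suc k"] assms by simp
  moreover have "real (n - Suc k) * f \<le> real (n - Suc k) * (\<Sum>j<Suc (Suc k). c j)"
    using feasible_partial_sum_ge[OF feas, of "Suc (Suc k)"] assms by (simp add: mult_left_mono)
  moreover have "real n * f = real (Suc k) * f + real (n - Suc k) * f"
    using assms by (simp add: of_nat_diff algebra_simps)
  ultimately have "real n * f \<le> real k"
    by linarith
  then show ?thesis
    using assms by (simp add: field_simps)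
qed

lemma feasible_partial_sum_eq:
  assumes feas: "feasible n k f c" and "1 \<le> k" "k + 2 \<le> n" and f: "f = real k / real n"
    and "k < m" "m \<le> n"
  shows "(\<Sum>j<m. c j) = f"
proof -
  have tight: "(\<Sum>j<m'. c j) = f \<and> (\<Sum>j<Suc m'. c j) = f" if "k < m'" "m' < n" for m'
  proof (rule weighted_sum_at_lower_bound)
    show "f \<le> (\<Sum>j<m'. c j)" "f \<le> (\<Sum>j<Suc m'. c j)"
      using that by (intro feasible_partial_sum_ge[OF feas \<open>1 \<le> k\<close>]; simp)+
    show "0 < real m'" "0 < real (n - m')"
      using that by simp_all
    have "real m' + real (n - m') = real n"
      using that by simp
    then show "real m' * (\<Sum>j<m'. c j) + real (n - m') * (\<Sum>j<Suc m'. c j)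
        \<le> (real m' + real (n - m')) * f"
      using feasible_step_bids(2)[OF feas, of m'] that assms by simp
  qed
  show ?thesis
  proof (cases "m < n")
    case True
    then show ?thesis using tight[of m] assms by simp
  next
    case False
    then show ?thesis using tight[of "n - 1"] assms by simp
  qed
qed

lemma feasible_ratio_eq_coeffs:
  assumes feas: "feasible n k (real k / real n) c" and "1 \<le> k" "k + 2 \<le> n" "i < n"
  shows "c i = (if i = k then real k / real n else 0)"
proof -
  have partial_sum: "(\<Sum>j<m. c j) = (if m \<le> k then 0 else real k / real n)" if "m \<le> n" for m
    using feasible_partial_sum_zero[OF feas] feasible_partial_sum_eq[OF feas] assms that by simp
  show ?thesis
    using partial_sum[of i] partial_sum[of "Suc i"] assms by (cases i k rule: linorder_cases) auto
qed

lemma feasible_proportional_rebate: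
  assumes "1 \<le> k" "k < n" and c: "\<forall>i<n. c i = (if i = k then real k / real n else 0)"
  shows "feasible n k (real k / real n) c"
  unfolding feasible_def
proof (intro allI impI)
  fix b assume ob: "ordered_bids n b"
  let ?q = "real k / real n"
  let ?r = "\<lambda>i. if i \<le> k then ?q * b (Suc k) else ?q * b k"
  have r: "rebate n c b i = ?r i" if "i \<in> {1..n}" for i
  proof -
    have "(\<Sum>j\<in>{1..<i}. c j * b j) = (\<Sum>j\<in>{1..<i}. if j = k then ?q * b k else 0)"
      using c that by (intro sum.cong) auto
    moreover have "(\<Sum>j\<in>{i..<n}. c j * b (Suc j)) = (\<Sum>j\<in>{i..<n}. if j = k then ?q * b (Suc k) else 0)"
      using c by (intro sum.cong) auto
    moreover have "c 0 = 0"
      using c assms by simp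
    ultimately show ?thesis
      using assms that by (simp add: rebate_def sum.delta)
  qed
  have "0 \<le> b k" "b (Suc k) \<le> b k"
    using ordered_bids_nonneg[OF ob] ob assms by (auto simp: ordered_bids_def)
  have "(\<Sum>i=1..n. rebate n c b i) = (\<Sum>i=1..n. ?r i)"
    using r by (intro sum.cong) auto
  also have "\<dots> = real k * (?q * b (Suc k)) + real (n - k) * (?q * b k)"
    using \<open>k < n\<close> by (simp only: sum_if_le_threshold min_absorb1 less_imp_le)
  also have "\<dots> \<le> real k * (?q * b k) + real (n - k) * (?q * b k)"
    using \<open>b (Suc k) \<le> b k\<close> by (intro add_right_mono mult_left_mono) simp_all
  also have "\<dots> = real k * b k"
    using assms by (simp add: field_simps of_nat_diff)
  finally have "(\<Sum>i=1..n. rebate n c b i) \<le> real k * b k" .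
  moreover have "(\<Sum>i=1..k. rebate n c b i) = (\<Sum>i=1..k. ?r i)"
    using r assms by (intro sum.cong) auto
  moreover have "(\<Sum>i=1..k. ?r i) = ?q * (real k * b (Suc k))"
    by (simp only: sum_if_le_threshold min.idem diff_self_eq_0) simp
  moreover have "0 \<le> rebate n c b n"
    using r[of n] \<open>0 \<le> b k\<close> assms by simp
  ultimately show "0 \<le> rebate n c b n \<and> (\<Sum>i=1..n. rebate n c b i) \<le> real k * b k \<and>
      ?q * (real k * b (Suc k)) \<le> (\<Sum>i=1..k. rebate n c b i)"
    by simp
qed

theorem theorem4:
  fixes n k :: nat and f :: real and c :: "nat \<Rightarrow> real"
  assumes "1 \<le> k" and "k + 2 \<le> n"
  shows "optimal n k f c \<longleftrightarrow>
           (f = real k / real n \<and> (\<forall>i<n. c i = (if i = k then real k / real n else 0)))"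
proof
  assume opt: "optimal n k f c"
  then have feas: "feasible n k f c"
    by (simp add: optimal_def)
  have "feasible n k (real k / real n) (\<lambda>i. if i = k then real k / real n else 0)"
    using assms by (intro feasible_proportional_rebate) simp_all
  then have "f = real k / real n"
    using opt feasible_ratio_le[OF feas assms] unfolding optimal_def by (meson order_antisym)
  then show "f = real k / real n \<and> (\<forall>i<n. c i = (if i = k then real k / real n else 0))"
    using feasible_ratio_eq_coeffs[of n k c] feas assms by simp
next
  assume "f = real k / real n \<and> (\<forall>i<n. c i = (if i = k then real k / real n else 0))"
  then show "optimal n k f c"
    using feasible_proportional_rebate[of k n c] feasible_ratio_le assms
    unfolding optimal_def by simp
qed

end
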